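(* Let $0<\varepsilon\le1/4$, $\beta>1$, and define $\psi_{\varepsilon,\beta}:[0,1]\to[0,1]$ by $\psi_{\varepsilon,\beta}(x)=x$ for $x\in[0,\varepsilon]$, $\psi_{\varepsilon,\beta}(x)=\varepsilon+(1-2\varepsilon)^{1-\beta}(x-\varepsilon)^\beta$ for $x\in[\varepsilon,1-\varepsilon]$, and $\psi_{\varepsilon,\beta}(x)=x$ for $x\in[1-\varepsilon,1]$. For $n\ge1$ let $$d_n=\int_0^1\int_0^{\psi_{\varepsilon,\beta}(x_1)}\int_0^{\psi_{\varepsilon,\beta}(x_2)}\cdots\int_0^{\psi_{\varepsilon,\beta}(x_{n-1})}dx_n\cdots dx_1 .$$ Then (1) for $n=1,2,\dots$, $$d_n=\frac{(2\varepsilon)^n}{n!}+\frac{(1-2\varepsilon)(2\varepsilon)^{n-1}}{(n-1)!}+\sum_{l=2}^n\frac{(1-2\varepsilon)^l(2\varepsilon)^{n-l}}{(n-l)!\,(1+\beta)(1+\beta+\beta^2)\cdots(1+\beta+\dots+\beta^{l-1})};$$ (2) there is a constant $C(\varepsilon,\beta)$ not depending on $n$ such that $d_n<C(\varepsilon,\beta)\frac{(4\varepsilon)^n}{n!}$ for $n=1,2,\dots$. *)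

theory Defs
  imports "HOL-Analysis.Analysis"
begin

definition psi :: "real \<Rightarrow> real \<Rightarrow> real \<Rightarrow> real" where
  "psi eps beta x =
     (if x \<le> eps then x
      else if x \<le> 1 - eps then eps + (1 - 2*eps) powr (1 - beta) * (x - eps) powr beta
      else x)"

text \<open>Inner iterated integrals: iint k x = integral over 0 <= y <= psi(x) of iint (k-1) y,
  with iint 0 = 1.  So iint k x_j is the integral over x_{j+1},...,x_{j+k}.\<close>
fun iint :: "real \<Rightarrow> real \<Rightarrow> nat \<Rightarrow> real \<Rightarrow> real" where
  "iint eps beta 0 x = 1"
| "iint eps beta (Suc k) x = integral {0..psi eps beta x} (iint eps beta k)"

definition d :: "real \<Rightarrow> real \<Rightarrow> nat \<Rightarrow> real" where
  "d eps beta n = integral {0..1} (iint eps beta (n - 1))"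

end

theory Submission
  imports Defs
begin

text \<open>
  Put \<open>c = 1 - 2\<epsilon>\<close> and \<open>S\<^sub>l = 1 + \<beta> + \<dots> + \<beta>\<^sup>l\<close>. The \<open>k\<close>-fold inner integral is
  computed piece by piece on \<open>[0,1]\<close>: it is \<open>x\<^sup>k/k!\<close> on \<open>[0,\<epsilon>]\<close>, a polynomial in
  \<open>x - (1 - \<epsilon>)\<close> on \<open>[1 - \<epsilon>,1]\<close>, and on the middle piece a combination of the powers
  \<open>u\<^bsup>S\<^sub>l - 1\<^esup>\<close>, \<open>l \<le> k\<close>, of \<open>u = (x - \<epsilon>)/c\<close>. The middle form survives one more
  integration because \<open>\<psi>(x) = \<epsilon> + c u\<^sup>\<beta>\<close>: substituted into the primitive \<open>u\<^bsup>S\<^sub>l\<^esup>/S\<^sub>l\<close>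
  it gives \<open>u\<^bsup>\<beta> S\<^sub>l\<^esup> = u\<^bsup>S\<^sub>l\<^sub>+\<^sub>1 - 1\<^esup>\<close>, which produces the denominators
  \<open>S\<^sub>1 \<cdots> S\<^sub>l\<^sub>-\<^sub>1\<close>. Evaluating at \<open>x = 1\<close> and regrouping with the exponential
  convolution \<open>\<Sum>\<^sub>m \<epsilon>\<^sup>m/m! \<cdot> \<epsilon>\<^bsup>j-m\<^esup>/(j-m)! = (2\<epsilon>)\<^sup>j/j!\<close> yields (1). The \<open>l\<close>-th term
  of (1) is \<open>(4\<epsilon>)\<^sup>n/n! \<cdot> 2\<^sup>-\<^sup>n (n choose l) \<cdot> l! r\<^sup>l/(S\<^sub>1 \<cdots> S\<^sub>l\<^sub>-\<^sub>1)\<close> with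
  \<open>r = c/(2\<epsilon>)\<close>, and the last factor is summable in \<open>l\<close> since \<open>S\<^sub>l \<ge> \<beta>\<^sup>l\<close>; this gives (2).
\<close>

definition geom_sum :: "real \<Rightarrow> nat \<Rightarrow> real" where
  "geom_sum b l = (\<Sum>i=0..l. b ^ i)"

definition geom_sum_prod :: "real \<Rightarrow> nat \<Rightarrow> real" where
  "geom_sum_prod b l = (\<Prod>j=1..l-1. geom_sum b j)"

lemma geom_sum_0 [simp]: "geom_sum b 0 = 1"
  by (simp add: geom_sum_def)

lemma geom_sum_Suc: "geom_sum b (Suc l) = 1 + b * geom_sum b l"
  unfolding geom_sum_def by (subst sum.atLeast0_atMost_Suc_shift) (simp add: sum_distrib_left)

lemma geom_sum_ge_one: "0 \<le> b \<Longrightarrow> 1 \<le> geom_sum b l"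
  by (induction l) (auto simp: geom_sum_Suc)

lemma geom_sum_pos: "0 \<le> b \<Longrightarrow> 0 < geom_sum b l"
  using geom_sum_ge_one[of b l] by simp

lemma geom_sum_ge_power: "0 \<le> b \<Longrightarrow> b ^ l \<le> geom_sum b l"
  unfolding geom_sum_def by (intro member_le_sum) auto

lemma geom_sum_prod_0 [simp]: "geom_sum_prod b 0 = 1"
  and geom_sum_prod_Suc_0 [simp]: "geom_sum_prod b (Suc 0) = 1"
  by (simp_all add: geom_sum_prod_def)

lemma geom_sum_prod_Suc: "geom_sum_prod b (Suc l) = geom_sum_prod b l * geom_sum b l"
  by (cases l) (simp_all add: geom_sum_prod_def prod.cl_ivl_Suc)

lemma geom_sum_prod_pos: "0 \<le> b \<Longrightarrow> 0 < geom_sum_prod b l"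
  unfolding geom_sum_prod_def by (intro prod_pos) (simp add: geom_sum_pos)

lemma summable_fact_power_div_geom_sum_prod:
  fixes b r :: real
  assumes "1 < b"
  shows "summable (\<lambda>l. fact l * r ^ l / geom_sum_prod b l)"
proof -
  define q where "q l = \<bar>r\<bar> * b * (real (Suc l) * (1 / b) ^ Suc l)" for l
  have "(\<lambda>l. real (Suc l) * (1 / b) ^ Suc l) \<longlonglongrightarrow> 0"
    using LIMSEQ_Suc[OF powser_times_n_limit_0[of "1 / b"]] assms by simp
  then have "q \<longlonglongrightarrow> \<bar>r\<bar> * b * 0"
    unfolding q_def by (intro tendsto_mult tendsto_const)
  then have "\<forall>\<^sub>F l in sequentially. q l < 1 / 2"
    by (intro order_tendstoD(2)) auto
  then obtain N where N: "\<And>l. N \<le> l \<Longrightarrow> q l < 1 / 2"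
    by (auto simp: eventually_sequentially)
  show ?thesis
  proof (rule summable_ratio_test[of "1 / 2" N])
    fix l assume "N \<le> l"
    have b0: "0 < b ^ l" and S0: "0 < geom_sum b l"
      using assms geom_sum_pos[of b l] by simp_all
    have "real (Suc l) * \<bar>r\<bar> / geom_sum b l \<le> real (Suc l) * \<bar>r\<bar> / b ^ l"
      using geom_sum_ge_power[of b l] b0 S0 assms by (intro divide_left_mono mult_pos_pos) auto
    also have "\<dots> = q l"
      using assms by (simp add: q_def field_simps)
    finally have ratio: "real (Suc l) * \<bar>r\<bar> / geom_sum b l \<le> 1 / 2"
      using N[OF \<open>N \<le> l\<close>] by linarith
    have "norm (fact (Suc l) * r ^ Suc l / geom_sum_prod b (Suc l))
        = norm (fact l * r ^ l / geom_sum_prod b l) * (real (Suc l) * \<bar>r\<bar> / geom_sum b l)"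
      using assms S0 geom_sum_prod_pos[of b l]
      by (simp add: geom_sum_prod_Suc abs_mult power_abs field_simps del: of_nat_Suc)
    also have "\<dots> \<le> norm (fact l * r ^ l / geom_sum_prod b l) * (1 / 2)"
      by (rule mult_left_mono[OF ratio norm_ge_zero])
    finally show "norm (fact (Suc l) * r ^ Suc l / geom_sum_prod b (Suc l))
        \<le> 1 / 2 * norm (fact l * r ^ l / geom_sum_prod b l)"
      by (simp only: mult.commute)
  qed simp
qed

lemma has_integral_powr_shifted:
  fixes a c s t :: real
  assumes "0 < c" "-1 < a" "s \<le> t"
  shows "((\<lambda>x. ((x - s) / c) powr a) has_integral c * ((t - s) / c) powr (a + 1) / (a + 1)) {s..t}"
proof -
  define F where "F x = c * ((x - s) / c) powr (a + 1) / (a + 1)" for x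
  have "((\<lambda>x. ((x - s) / c) powr a) has_integral F t - F s) {s..t}"
  proof (rule fundamental_theorem_of_calculus_interior)
    show "continuous_on {s..t} F" unfolding F_def using assms
      by (auto intro!: continuous_intros continuous_on_powr')
    fix x assume "x \<in> {s<..<t}"
    then have "((\<lambda>x. ((x - s) / c) powr (a + 1)) has_real_derivative
        ((a + 1) * ((x - s) / c) powr (a + 1 - 1)) * (1 / c)) (at x)"
      using assms
      by (intro DERIV_chain2[where f="\<lambda>u. u powr (a + 1)"] has_real_derivative_powr)
         (auto intro!: derivative_eq_intros)
    from DERIV_cdivide[OF DERIV_cmult[OF this, where c=c], where c="a + 1"]
    have "(F has_real_derivative ((x - s) / c) powr a) (at x)"
      unfolding F_def using assms by simp
    then show "(F has_vector_derivative ((x - s) / c) powr a) (at x)"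
      by (simp add: has_real_derivative_iff_has_vector_derivative)
  qed (use assms in auto)
  moreover have "F s = 0" using assms by (simp add: F_def)
  ultimately show ?thesis by (simp add: F_def)
qed

lemma has_integral_shifted_power_div_fact:
  fixes s t :: real
  assumes "s \<le> t"
  shows "((\<lambda>x. (x - s) ^ k / fact k) has_integral (t - s) ^ Suc k / fact (Suc k)) {s..t}"
proof -
  have "((\<lambda>x. (x - s) ^ k / fact k)
         has_integral (t - s) ^ Suc k / fact (Suc k) - (s - s) ^ Suc k / fact (Suc k)) {s..t}"
  proof (rule fundamental_theorem_of_calculus_interior)
    fix x
    have "((\<lambda>x. (x - s) ^ Suc k) has_real_derivative real (Suc k) * (x - s) ^ k) (at x)"
      by (rule DERIV_cong[OF DERIV_power[OF DERIV_diff[OF DERIV_ident DERIV_const]]]) simp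
    from DERIV_cdivide[OF this, where c="fact (Suc k)"]
    have "((\<lambda>x. (x - s) ^ Suc k / fact (Suc k)) has_real_derivative (x - s) ^ k / fact k) (at x)"
      by (simp add: fact_Suc del: of_nat_Suc)
    then show "((\<lambda>x. (x - s) ^ Suc k / fact (Suc k))
        has_vector_derivative (x - s) ^ k / fact k) (at x)"
      by (simp add: has_real_derivative_iff_has_vector_derivative)
  qed (use assms in \<open>auto intro!: continuous_intros\<close>)
  then show ?thesis by simp
qed

lemma sum_triangle_swap:
  fixes F :: "nat \<Rightarrow> nat \<Rightarrow> 'a::comm_monoid_add"
  shows "(\<Sum>m\<le>n. \<Sum>l\<le>n - m. F m l) = (\<Sum>l\<le>n. \<Sum>m\<le>n - l. F m l)"
proof -
  have "(\<Sum>m\<le>n. \<Sum>l\<le>n - m. F m l) = (\<Sum>m\<le>n. \<Sum>l | l \<in> {..n} \<and> m + l \<le> n. F m l)"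
    by (intro sum.cong refl arg_cong[where f="sum _"]) auto
  also have "\<dots> = (\<Sum>l\<le>n. \<Sum>m | m \<in> {..n} \<and> m + l \<le> n. F m l)"
    by (rule sum.swap_restrict) auto
  also have "\<dots> = (\<Sum>l\<le>n. \<Sum>m\<le>n - l. F m l)"
    by (intro sum.cong refl arg_cong[where f="sum _"]) auto
  finally show ?thesis .
qed

lemma sum_power_div_fact_convolution:
  fixes x y :: "'a::field_char_0"
  shows "(\<Sum>m\<le>n. x ^ m / fact m * (y ^ (n - m) / fact (n - m))) = (x + y) ^ n / fact n"
proof -
  have "x ^ m / fact m * (y ^ (n - m) / fact (n - m))
      = of_nat (n choose m) * x ^ m * y ^ (n - m) / fact n" if "m \<le> n" for m
    using that by (simp add: binomial_fact field_simps)
  then show ?thesis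
    by (simp add: binomial_ring sum_divide_distrib)
qed

locale psi_parameters =
  fixes e b :: real
  assumes e_pos: "0 < e" and e_le: "e \<le> 1/4" and b_gt_1: "1 < b"
begin

abbreviation "c \<equiv> 1 - 2 * e"

lemma c_pos: "0 < c"
  using e_le by simp

lemma e_less_1_minus_e: "e < 1 - e"
  using e_le e_pos by simp

lemma geom_sum_b_pos: "0 < geom_sum b l"
  using geom_sum_pos b_gt_1 by simp

lemma geom_sum_prod_b_pos: "0 < geom_sum_prod b l"
  using geom_sum_prod_pos b_gt_1 by simp

lemma psi_middle:
  assumes "e < x" "x \<le> 1 - e"
  shows "psi e b x = e + c * ((x - e) / c) powr b"
proof -
  have "c powr (1 - b) * (x - e) powr b = c * ((x - e) / c) powr b"
    using c_pos assms by (simp add: powr_divide powr_diff)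
  then show ?thesis
    using assms by (simp add: psi_def)
qed

definition mid_coeff :: "nat \<Rightarrow> nat \<Rightarrow> real" where
  "mid_coeff k l = c ^ l * e ^ (k - l) / (fact (k - l) * geom_sum_prod b l)"

definition top_coeff :: "nat \<Rightarrow> real" where
  "top_coeff k = (\<Sum>l\<le>k. mid_coeff k l)"

definition inner :: "nat \<Rightarrow> real \<Rightarrow> real" where
  "inner k x =
     (if x \<le> e then x ^ k / fact k
      else if x \<le> 1 - e then (\<Sum>l\<le>k. mid_coeff k l * ((x - e) / c) powr (geom_sum b l - 1))
      else (\<Sum>m\<le>k. top_coeff (k - m) * ((x - (1 - e)) ^ m / fact m)))"

definition mid_primitive :: "nat \<Rightarrow> real \<Rightarrow> real" where
  "mid_primitive k t =
     (\<Sum>l\<le>k. mid_coeff k l * (c * ((t - e) / c) powr geom_sum b l / geom_sum b l))"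

lemma mid_coeff_0: "mid_coeff k 0 = e ^ k / fact k"
  by (simp add: mid_coeff_def)

lemma mid_coeff_Suc: "mid_coeff (Suc k) (Suc l) = c * mid_coeff k l / geom_sum b l"
  using geom_sum_b_pos[of l] geom_sum_prod_b_pos[of l]
  by (simp add: mid_coeff_def geom_sum_prod_Suc field_simps)

lemma mid_primitive_substitution:
  assumes "0 < w"
  shows "e ^ Suc k / fact (Suc k) + mid_primitive k (e + c * w powr b)
       = (\<Sum>l\<le>Suc k. mid_coeff (Suc k) l * w powr (geom_sum b l - 1))"
proof -
  have "(\<Sum>l\<le>Suc k. mid_coeff (Suc k) l * w powr (geom_sum b l - 1))
      = mid_coeff (Suc k) 0 * w powr 0
        + (\<Sum>l\<le>k. mid_coeff (Suc k) (Suc l) * w powr (geom_sum b (Suc l) - 1))"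
    by (subst sum.atMost_Suc_shift) simp
  also have "mid_coeff (Suc k) 0 * w powr 0 = e ^ Suc k / fact (Suc k)"
    using assms by (simp add: mid_coeff_0)
  also have "(\<Sum>l\<le>k. mid_coeff (Suc k) (Suc l) * w powr (geom_sum b (Suc l) - 1))
      = mid_primitive k (e + c * w powr b)"
    unfolding mid_primitive_def using c_pos
    by (intro sum.cong refl) (simp add: mid_coeff_Suc geom_sum_Suc powr_powr)
  finally show ?thesis ..
qed

lemma top_coeff_Suc: "top_coeff (Suc k) = e ^ Suc k / fact (Suc k) + mid_primitive k (1 - e)"
  using mid_primitive_substitution[of 1 k] by (simp add: top_coeff_def)

lemma has_integral_inner_initial:
  assumes "0 \<le> t" "t \<le> e"
  shows "(inner k has_integral inner (Suc k) t) {0..t}"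
proof -
  have "((\<lambda>x. x ^ k / fact k) has_integral t ^ Suc k / fact (Suc k)) {0..t}"
    using has_integral_shifted_power_div_fact[OF assms(1), of k] by simp
  then show ?thesis
    using assms by (subst has_integral_spike_finite_eq[of "{}"]) (auto simp: inner_def)
qed

lemma has_integral_inner_middle:
  assumes "e \<le> t" "t \<le> 1 - e"
  shows "(inner k has_integral mid_primitive k t) {e..t}"
proof -
  have "((\<lambda>x. ((x - e) / c) powr (geom_sum b l - 1))
         has_integral c * ((t - e) / c) powr geom_sum b l / geom_sum b l) {e..t}" for l
    using has_integral_powr_shifted[OF c_pos _ assms(1), of "geom_sum b l - 1"] geom_sum_b_pos[of l]
    by simp
  then have "((\<lambda>x. \<Sum>l\<le>k. mid_coeff k l * ((x - e) / c) powr (geom_sum b l - 1))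
         has_integral mid_primitive k t) {e..t}"
    unfolding mid_primitive_def by (intro has_integral_sum has_integral_mult_right) auto
  then show ?thesis
    using assms by (subst has_integral_spike_finite_eq[of "{e}"]) (auto simp: inner_def)
qed

lemma has_integral_inner_final:
  assumes "1 - e \<le> t"
  shows "(inner k has_integral
           (\<Sum>m\<le>k. top_coeff (k - m) * ((t - (1 - e)) ^ Suc m / fact (Suc m)))) {1 - e..t}"
proof -
  have "((\<lambda>x. \<Sum>m\<le>k. top_coeff (k - m) * ((x - (1 - e)) ^ m / fact m))
         has_integral (\<Sum>m\<le>k. top_coeff (k - m) * ((t - (1 - e)) ^ Suc m / fact (Suc m))))
         {1 - e..t}"
    using has_integral_shifted_power_div_fact[OF assms]
    by (intro has_integral_sum has_integral_mult_right) auto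
  then show ?thesis
    using assms e_less_1_minus_e
    by (subst has_integral_spike_finite_eq[of "{1 - e}"]) (auto simp: inner_def)
qed

lemma has_integral_inner_upto_middle:
  assumes "e \<le> t" "t \<le> 1 - e"
  shows "(inner k has_integral e ^ Suc k / fact (Suc k) + mid_primitive k t) {0..t}"
proof -
  have "inner (Suc k) e = e ^ Suc k / fact (Suc k)"
    by (simp add: inner_def)
  then show ?thesis
    using has_integral_inner_initial[of e k] has_integral_inner_middle[OF assms, of k] assms e_pos
    by (intro has_integral_combine[of 0 e t]) auto
qed

lemma has_integral_inner_upto_final:
  assumes "1 - e < t"
  shows "(inner k has_integral inner (Suc k) t) {0..t}"
proof -
  have "inner (Suc k) t = (\<Sum>m\<le>Suc k. top_coeff (Suc k - m) * ((t - (1 - e)) ^ m / fact m))"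
    using assms e_less_1_minus_e by (simp add: inner_def del: sum.atMost_Suc)
  also have "\<dots> = top_coeff (Suc k)
      + (\<Sum>m\<le>k. top_coeff (k - m) * ((t - (1 - e)) ^ Suc m / fact (Suc m)))"
    by (simp only: sum.atMost_Suc_shift) simp
  finally have inner_Suc: "inner (Suc k) t = \<dots>" .
  have "(inner k has_integral top_coeff (Suc k)) {0..1 - e}"
    using has_integral_inner_upto_middle[of "1 - e" k] e_less_1_minus_e by (simp add: top_coeff_Suc)
  then show ?thesis
    unfolding inner_Suc using has_integral_inner_final[of t k] assms e_less_1_minus_e
    by (intro has_integral_combine[of 0 "1 - e" t]) auto
qed

lemma iint_eq_inner: "x \<in> {0..1} \<Longrightarrow> iint e b k x = inner k x"
proof (induction k arbitrary: x)
  case 0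
  then show ?case by (simp add: inner_def mid_coeff_def top_coeff_def)
next
  case (Suc k)
  have iint_Suc: "iint e b (Suc k) x = integral {0..psi e b x} (inner k)"
    if "0 \<le> psi e b x" "psi e b x \<le> 1"
    using Suc.IH that by (auto intro!: integral_cong)
  consider "x \<le> e" | "e < x" "x \<le> 1 - e" | "1 - e < x"
    by linarith
  then show ?case
  proof cases
    case 1
    then show ?thesis
      using Suc.prems iint_Suc has_integral_inner_initial[of x k] by (simp add: psi_def integral_unique)
  next
    case 3
    then show ?thesis
      using Suc.prems iint_Suc has_integral_inner_upto_final[of x k] e_less_1_minus_e
      by (simp add: psi_def integral_unique)
  next
    case 2
    define u where "u = (x - e) / c"
    have u: "0 < u" "u \<le> 1"
      using 2 c_pos by (auto simp: u_def field_simps)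
    then have "0 < u powr b" "u powr b \<le> 1"
      using b_gt_1 by (auto simp: powr_le1)
    then have "0 < c * u powr b" "c * u powr b \<le> c"
      using c_pos by (auto intro: mult_left_le)
    moreover have psi_x: "psi e b x = e + c * u powr b"
      using psi_middle[OF 2] by (simp add: u_def)
    ultimately have "e \<le> psi e b x" "psi e b x \<le> 1 - e"
      by linarith+
    then have "iint e b (Suc k) x = e ^ Suc k / fact (Suc k) + mid_primitive k (e + c * u powr b)"
      using iint_Suc has_integral_inner_upto_middle[of "psi e b x" k] e_pos psi_x
      by (simp add: integral_unique)
    also have "\<dots> = inner (Suc k) x"
      using mid_primitive_substitution[OF u(1)] 2 by (simp add: inner_def u_def)
    finally show ?thesis .
  qed
qed

lemma d_eq_top_coeff_convolution:
  assumes "1 \<le> n"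
  shows "d e b n = (\<Sum>m\<le>n. top_coeff (n - m) * (e ^ m / fact m))"
proof -
  have "d e b n = integral {0..1} (inner (n - 1))"
    unfolding d_def by (rule integral_cong) (simp add: iint_eq_inner)
  also have "\<dots> = inner n 1"
    using has_integral_inner_upto_final[of 1 "n - 1"] e_pos assms by (simp add: integral_unique)
  also have "\<dots> = (\<Sum>m\<le>n. top_coeff (n - m) * (e ^ m / fact m))"
    using e_pos e_less_1_minus_e by (simp add: inner_def)
  finally show ?thesis .
qed

lemma d_eq_sum:
  assumes "1 \<le> n"
  shows "d e b n = (\<Sum>l\<le>n. c ^ l * (2 * e) ^ (n - l) / (fact (n - l) * geom_sum_prod b l))"
proof -
  have "d e b n = (\<Sum>m\<le>n. \<Sum>l\<le>n - m. mid_coeff (n - m) l * (e ^ m / fact m))"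
    unfolding d_eq_top_coeff_convolution[OF assms] top_coeff_def by (simp only: sum_distrib_right)
  also have "\<dots> = (\<Sum>l\<le>n. \<Sum>m\<le>n - l. mid_coeff (n - m) l * (e ^ m / fact m))"
    by (rule sum_triangle_swap)
  also have "\<dots> = (\<Sum>l\<le>n. c ^ l / geom_sum_prod b l
                     * (\<Sum>m\<le>n - l. e ^ m / fact m * (e ^ (n - l - m) / fact (n - l - m))))"
    unfolding sum_distrib_left
  proof (intro sum.cong refl)
    have rearrange: "A * X / (F * P) * (Y / G) = A / P * (Y / G * (X / F))" for A X F P Y G :: real
      by (simp add: mult_ac)
    fix l m assume "m \<in> {..n - l}"
    have "n - m - l = n - l - m"
      by simp
    then show "mid_coeff (n - m) l * (e ^ m / fact m)
        = c ^ l / geom_sum_prod b l * (e ^ m / fact m * (e ^ (n - l - m) / fact (n - l - m)))"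
      unfolding mid_coeff_def by (simp only: rearrange)
  qed
  also have "\<dots> = (\<Sum>l\<le>n. c ^ l * (2 * e) ^ (n - l) / (fact (n - l) * geom_sum_prod b l))"
    unfolding sum_power_div_fact_convolution by (simp add: mult_ac flip: mult_2)
  finally show ?thesis .
qed

lemma d_formula:
  assumes "1 \<le> n"
  shows "d e b n = (2 * e) ^ n / fact n + c * (2 * e) ^ (n - 1) / fact (n - 1)
                   + (\<Sum>l=2..n. c ^ l * (2 * e) ^ (n - l) / (fact (n - l) * geom_sum_prod b l))"
proof -
  define f where "f l = c ^ l * (2 * e) ^ (n - l) / (fact (n - l) * geom_sum_prod b l)" for l
  have "{..n} = {0, 1} \<union> {2..n}"
    using assms by auto
  then have "(\<Sum>l\<le>n. f l) = (\<Sum>l\<in>{0, 1}. f l) + (\<Sum>l=2..n. f l)"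
    by (simp only:) (rule sum.union_disjoint, auto)
  then show ?thesis
    unfolding d_eq_sum[OF assms] by (simp add: f_def)
qed

lemma d_summand_eq:
  assumes "l \<le> n"
  shows "c ^ l * (2 * e) ^ (n - l) / (fact (n - l) * geom_sum_prod b l)
       = (4 * e) ^ n / fact n * (real (n choose l) / 2 ^ n)
         * (fact l * (c / (2 * e)) ^ l / geom_sum_prod b l)"
proof -
  have "(4 * e) ^ n = (2 * (2 * e)) ^ n"
    by simp
  also have "\<dots> = 2 ^ n * ((2 * e) ^ (n - l) * (2 * e) ^ l)"
    unfolding power_mult_distrib[of 2 "2 * e"] power_add[symmetric] using assms by simp
  finally show ?thesis
    using assms e_pos geom_sum_prod_b_pos[of l] by (simp add: binomial_fact field_simps)
qed

definition bound_const :: real where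
  "bound_const = (\<Sum>l. fact l * (c / (2 * e)) ^ l / geom_sum_prod b l)"

lemma d_le_bound_const:
  assumes "1 \<le> n"
  shows "d e b n \<le> bound_const * (4 * e) ^ n / fact n"
proof -
  define w where "w l = fact l * (c / (2 * e)) ^ l / geom_sum_prod b l" for l
  have w_nonneg: "0 \<le> w l" for l
    using c_pos e_pos geom_sum_prod_b_pos[of l] by (simp add: w_def)
  have w_le: "w l \<le> bound_const" for l
    using sum_le_suminf[OF summable_fact_power_div_geom_sum_prod[OF b_gt_1], of "{l}"] w_nonneg
    by (simp add: w_def bound_const_def)
  have "d e b n = (\<Sum>l\<le>n. (4 * e) ^ n / fact n * (real (n choose l) / 2 ^ n) * w l)"
    unfolding d_eq_sum[OF assms] w_def by (intro sum.cong refl d_summand_eq) simp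
  also have "\<dots> \<le> (\<Sum>l\<le>n. (4 * e) ^ n / fact n * (real (n choose l) / 2 ^ n) * bound_const)"
    using e_pos w_le by (intro sum_mono mult_left_mono) auto
  also have "\<dots> = (4 * e) ^ n / fact n * bound_const / 2 ^ n * (\<Sum>l\<le>n. real (n choose l))"
    by (simp add: sum_distrib_left sum_divide_distrib mult_ac)
  also have "(\<Sum>l\<le>n. real (n choose l)) = 2 ^ n"
    by (simp add: choose_row_sum flip: of_nat_sum)
  finally show ?thesis
    by (simp add: mult_ac)
qed

end

theorem lemma4p5:
  fixes eps beta :: real
  assumes "0 < eps" and "eps \<le> 1/4" and "beta > 1"
  shows "(\<forall>n::nat. n \<ge> 1 \<longrightarrow>
            d eps beta n =
              (2*eps)^n / fact n
            + (1 - 2*eps) * (2*eps)^(n-1) / fact (n-1)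
            + (\<Sum>l=2..n. (1 - 2*eps)^l * (2*eps)^(n-l) /
                 (fact (n-l) * (\<Prod>j=1..l-1. \<Sum>i=0..j. beta^i))))
       \<and> (\<exists>C::real. \<forall>n::nat. n \<ge> 1 \<longrightarrow> d eps beta n < C * (4*eps)^n / fact n)"
proof -
  interpret psi_parameters eps beta
    using assms by unfold_locales
  have "d eps beta n < (bound_const + 1) * (4 * eps) ^ n / fact n" if "1 \<le> n" for n
  proof -
    have "0 < (4 * eps) ^ n / fact n"
      using assms by simp
    then show ?thesis
      using d_le_bound_const[OF that] by (simp add: distrib_right add_divide_distrib)
  qed
  then show ?thesis
    using d_formula unfolding geom_sum_prod_def geom_sum_def by blast
qed

end
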